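(* Let $\mathbb{F}$ be a field of characteristic $0$ and $h=\mathsf{u}_1^{\alpha_1}\cdots\mathsf{u}_t^{\alpha_t}\in\mathbb{F}[x]$ with $\mathsf{u}_i$ distinct monic irreducible polynomials, $\alpha_1,\dots,\alpha_k\geq2$, $\alpha_{k+1}=\dots=\alpha_t=1$, and $k\geq1$. Let $\Theta_1=\mathsf{u}_1\cdots\mathsf{u}_k$. Then there is $\nu\in\mathbb{F}[x]$, unique modulo $\Theta_1\mathbb{F}[x]$, with $\nu\delta_0(1)\equiv1\pmod{\Theta_1\mathbb{F}[x]}$, and any such $\nu$ satisfies: (a) $\nu\pi_h'-1\equiv\nu\frac{\pi_hh'}{h}\pmod{\Theta_1\mathbb{F}[x]}$; (b) $\nu\pi_h'\equiv\frac{1}{1-\alpha_j}\pmod{\mathsf{u}_j\mathbb{F}[x]}$ for all $1\leq j\leq k$.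
   Context: $\pi_h=\mathsf{u}_1\cdots\mathsf{u}_t$, so $\pi_hh'/h\in\mathbb{F}[x]$, and $\delta_0(1)=\pi_h'-\pi_hh'/h$. *)

theory Defs
  imports "HOL-Computational_Algebra.Polynomial_Factorial"
begin

(* delta_0(1) = pi_h' - pi_h h'/h, where pi_h = u_1...u_t is the radical of h *)
definition delta0_one :: "'a::field poly \<Rightarrow> 'a poly \<Rightarrow> 'a poly" where
  "delta0_one h pih = pderiv pih - (pih * pderiv h) div h"

end

theory Submission
  imports Defs
begin

(* Write P_i for the product of the u_l with l different from i. The logarithmic derivative
   gives pi h'/h = sum_i alpha_i u_i' P_i, while pi' = sum_i u_i' P_i, so
   delta_0(1) = sum_i (1 - alpha_i) u_i' P_i. Modulo u_j all terms with i <> j vanish, hence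
   delta_0(1) = (1 - alpha_j) pi'  (mod u_j). Since pi is squarefree and the characteristic is 0,
   u_j does not divide pi' = u_j' P_j (mod u_j), and 1 - alpha_j <> 0 for j <= k. So delta_0(1) is
   invertible modulo every u_j, hence modulo their product Theta_1, and (b) follows by dividing
   nu delta_0(1) = 1 (mod u_j) by 1 - alpha_j. *)

(* gcd is not available for polynomials over an arbitrary field, so Bezout is proved directly. *)
lemma field_poly_bezout:
  fixes a b :: "'a::field poly"
  shows "\<exists>x y. x * a + y * b dvd a \<and> x * a + y * b dvd b"
proof (induction "degree b" arbitrary: a b rule: less_induct)
  case less
  consider "b = 0" | "b dvd a" | "b \<noteq> 0" "a mod b \<noteq> 0"
    by (auto simp: mod_eq_0_iff_dvd)
  then show ?case
  proof cases
    case 1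
    then show ?thesis by (metis add.right_neutral dvd_0_right dvd_refl mult_1)
  next
    case 2
    then show ?thesis by (metis add_0 dvd_refl mult_1 mult_zero_left)
  next
    case 3
    then have "degree (a mod b) < degree b" by (simp add: degree_mod_less')
    then obtain x y where xy: "x * b + y * (a mod b) dvd b" "x * b + y * (a mod b) dvd a mod b"
      using less by blast
    have a: "a = (a div b) * b + a mod b" by simp
    have "y * a = y * (a div b) * b + y * (a mod b)"
      by (metis a distrib_left mult.assoc)
    then have "x * b + y * (a mod b) = y * a + (x - y * (a div b)) * b"
      by (simp add: algebra_simps)
    moreover have "x * b + y * (a mod b) dvd a"
      using dvd_add[OF dvd_mult[OF xy(1), of "a div b"] xy(2)] a by metis
    ultimately show ?thesis using xy by metis
  qed
qed

lemma irreducible_imp_inverse_mod: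
  fixes p a :: "'a::field poly"
  assumes "irreducible p" and "\<not> p dvd a"
  shows "\<exists>x. p dvd x * a - 1"
proof -
  obtain x y where dvd_a: "x * a + y * p dvd a" and dvd_p: "x * a + y * p dvd p"
    using field_poly_bezout by blast
  have "is_unit (x * a + y * p)"
    using irreducibleD'[OF assms(1) dvd_p] dvd_a assms(2) dvd_trans by blast
  then obtain e where e: "(x * a + y * p) * e = 1" by (auto elim: dvdE)
  have "(e * x) * a - 1 = p * (- e * y)"
    using e by (simp add: algebra_simps flip: e)
  then show ?thesis by (metis dvd_triv_left)
qed

lemma inverse_mod_prod:
  fixes f :: "'b \<Rightarrow> 'a::comm_ring_1"
  assumes "finite S" and "\<forall>j\<in>S. \<exists>x. f j dvd x * a - 1"
  shows "\<exists>x. prod f S dvd x * a - 1"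
  using assms
proof (induction S rule: finite_induct)
  case empty
  show ?case by simp
next
  case (insert j F)
  then obtain x where x: "prod f F dvd x * a - 1" by auto
  obtain y where y: "f j dvd y * a - 1" using insert by auto
  have "(x + y - x * y * a) * a - 1 = - ((y * a - 1) * (x * a - 1))"
    by (simp add: algebra_simps)
  moreover have "f j * prod f F dvd (y * a - 1) * (x * a - 1)"
    using x y by (rule mult_dvd_mono[rotated])
  ultimately have "prod f (insert j F) dvd (x + y - x * y * a) * a - 1"
    using insert by simp
  then show ?case by blast
qed

lemma inverse_mod_unique:
  fixes m a x1 x2 :: "'a::comm_ring_1"
  assumes "m dvd x1 * a - 1" and "m dvd x2 * a - 1"
  shows "m dvd x1 - x2"
proof -
  have "x1 - x2 = x1 * ((x1 * a - 1) - (x2 * a - 1)) - (x1 * a - 1) * (x1 - x2)"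
    by (simp add: algebra_simps)
  also have "m dvd \<dots>" by (rule dvd_diff[OF dvd_mult[OF dvd_diff[OF assms]] dvd_mult2[OF assms(1)]])
  finally show ?thesis .
qed

lemma inverse_mod_smult:
  fixes p \<nu> d e :: "'a::field poly"
  assumes "p dvd \<nu> * d - 1" and "p dvd d - smult c e" and "c \<noteq> 0"
  shows "p dvd \<nu> * e - [:1 / c:]"
proof -
  have "smult c (\<nu> * e - [:1 / c:]) = (\<nu> * d - 1) - \<nu> * (d - smult c e)"
    using assms(3) by (simp add: algebra_simps smult_diff_right)
  also have "p dvd \<dots>" using assms(1,2) by (rule dvd_diff[OF _ dvd_mult])
  finally show ?thesis using assms(3) by (rule dvd_smult_cancel)
qed

lemma prime_elem_dvd_prod_iff:
  assumes "prime_elem p" and "finite A"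
  shows "p dvd (\<Prod>i\<in>A. f i) \<longleftrightarrow> (\<exists>i\<in>A. p dvd f i)"
  using assms(2)
proof (induction A rule: finite_induct)
  case empty
  then show ?case using assms(1) prime_elem_not_unit by auto
next
  case (insert x F)
  then show ?case using prime_elem_dvd_mult_iff[OF assms(1)] by auto
qed

lemma monic_dvd_antisym:
  fixes p q :: "'a::field poly"
  assumes "lead_coeff p = 1" "lead_coeff q = 1" "p dvd q" "q dvd p"
  shows "p = q"
proof -
  from \<open>p dvd q\<close> obtain c where c: "q = p * c" ..
  have "p \<noteq> 0" using assms(1) by auto
  then have "is_unit c" using c \<open>q dvd p\<close> by (metis dvd_mult_cancel_left mult.right_neutral)
  then obtain c0 where "c = [:c0:]" by (auto simp: is_unit_poly_iff)
  moreover have "lead_coeff c = 1" using assms(1,2) c by (simp add: lead_coeff_mult)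
  ultimately show ?thesis using c by simp
qed

lemma dvd_sum_prod_remove:
  fixes u f :: "'b \<Rightarrow> 'a::comm_ring_1"
  assumes "finite A" and "j \<in> A"
  shows "u j dvd (\<Sum>i\<in>A. f i * (\<Prod>l\<in>A-{i}. u l)) - f j * (\<Prod>l\<in>A-{j}. u l)"
proof -
  have "(\<Sum>i\<in>A. f i * (\<Prod>l\<in>A-{i}. u l)) - f j * (\<Prod>l\<in>A-{j}. u l)
      = (\<Sum>i\<in>A-{j}. f i * (\<Prod>l\<in>A-{i}. u l))"
    using assms by (simp add: sum.remove)
  also have "u j dvd \<dots>"
    using assms by (intro dvd_sum dvd_mult dvd_prodI) auto
  finally show ?thesis .
qed

lemma prod_mult_pderiv_prod_power:
  fixes u :: "'b \<Rightarrow> 'a::field poly"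
  assumes "finite A" and "\<forall>i\<in>A. \<alpha> i \<ge> 1"
  shows "(\<Prod>i\<in>A. u i) * pderiv (\<Prod>i\<in>A. u i ^ \<alpha> i) =
     (\<Prod>i\<in>A. u i ^ \<alpha> i) * (\<Sum>i\<in>A. smult (of_nat (\<alpha> i)) (pderiv (u i) * (\<Prod>l\<in>A-{i}. u l)))"
proof -
  have "(\<Prod>i\<in>A. u i) * pderiv (\<Prod>i\<in>A. u i ^ \<alpha> i) =
     (\<Sum>i\<in>A. (\<Prod>i\<in>A. u i) * ((\<Prod>l\<in>A-{i}. u l ^ \<alpha> l) * pderiv (u i ^ \<alpha> i)))"
    by (simp add: pderiv_prod sum_distrib_left)
  also have "\<dots> = (\<Sum>i\<in>A. (\<Prod>i\<in>A. u i ^ \<alpha> i) * smult (of_nat (\<alpha> i)) (pderiv (u i) * (\<Prod>l\<in>A-{i}. u l)))"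
  proof (rule sum.cong[OF refl])
    fix i assume i: "i \<in> A"
    have prod_u: "(\<Prod>i\<in>A. u i) = u i * (\<Prod>l\<in>A-{i}. u l)"
      using i assms(1) by (simp add: prod.remove)
    have prod_power: "(\<Prod>i\<in>A. u i ^ \<alpha> i) = u i ^ \<alpha> i * (\<Prod>l\<in>A-{i}. u l ^ \<alpha> l)"
      using i assms(1) by (simp add: prod.remove)
    have power: "u i * u i ^ (\<alpha> i - 1) = u i ^ \<alpha> i"
      using assms(2) i by (metis Suc_diff_le diff_Suc_1 power_Suc)
    show "(\<Prod>i\<in>A. u i) * ((\<Prod>l\<in>A-{i}. u l ^ \<alpha> l) * pderiv (u i ^ \<alpha> i)) =
        (\<Prod>i\<in>A. u i ^ \<alpha> i) * smult (of_nat (\<alpha> i)) (pderiv (u i) * (\<Prod>l\<in>A-{i}. u l))"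
      unfolding prod_u prod_power pderiv_power by (simp add: algebra_simps flip: power)
  qed
  finally show ?thesis by (simp add: sum_distrib_left)
qed

lemma delta0_one_prod:
  fixes u :: "'b \<Rightarrow> 'a::field poly"
  assumes "finite A" and "\<forall>i\<in>A. \<alpha> i \<ge> 1" and "\<forall>i\<in>A. u i \<noteq> 0"
  shows "delta0_one (\<Prod>i\<in>A. u i ^ \<alpha> i) (\<Prod>i\<in>A. u i) =
     (\<Sum>i\<in>A. smult (1 - of_nat (\<alpha> i)) (pderiv (u i) * (\<Prod>l\<in>A-{i}. u l)))"
proof -
  have "(\<Prod>i\<in>A. u i ^ \<alpha> i) \<noteq> 0" using assms(1,3) by simp
  then have "((\<Prod>i\<in>A. u i) * pderiv (\<Prod>i\<in>A. u i ^ \<alpha> i)) div (\<Prod>i\<in>A. u i ^ \<alpha> i)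
      = (\<Sum>i\<in>A. smult (of_nat (\<alpha> i)) (pderiv (u i) * (\<Prod>l\<in>A-{i}. u l)))"
    unfolding prod_mult_pderiv_prod_power[OF assms(1,2)] by simp
  moreover have "pderiv (\<Prod>i\<in>A. u i) = (\<Sum>i\<in>A. pderiv (u i) * (\<Prod>l\<in>A-{i}. u l))"
    by (simp add: pderiv_prod mult.commute)
  ultimately show ?thesis
    by (simp add: delta0_one_def smult_diff_left sum_subtractf)
qed

lemma dvd_delta0_one_minus_pderiv:
  fixes u :: "'b \<Rightarrow> 'a::field poly"
  assumes "finite A" and "\<forall>i\<in>A. \<alpha> i \<ge> 1" and "\<forall>i\<in>A. u i \<noteq> 0" and "j \<in> A"
  shows "u j dvd delta0_one (\<Prod>i\<in>A. u i ^ \<alpha> i) (\<Prod>i\<in>A. u i)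
                 - smult (1 - of_nat (\<alpha> j)) (pderiv (\<Prod>i\<in>A. u i))"
proof -
  define c where "c i = (1 - of_nat (\<alpha> i) :: 'a)" for i
  define P where "P i = (\<Prod>l\<in>A-{i}. u l)" for i
  have delta: "delta0_one (\<Prod>i\<in>A. u i ^ \<alpha> i) (\<Prod>i\<in>A. u i) = (\<Sum>i\<in>A. smult (c i) (pderiv (u i)) * P i)"
    using delta0_one_prod[OF assms(1-3)] by (simp add: c_def P_def)
  have pderiv: "pderiv (\<Prod>i\<in>A. u i) = (\<Sum>i\<in>A. pderiv (u i) * P i)"
    by (simp add: P_def pderiv_prod mult.commute)
  have "u j dvd (\<Sum>i\<in>A. smult (c i) (pderiv (u i)) * P i) - smult (c j) (pderiv (u j)) * P j"
    unfolding P_def using assms(1,4) by (rule dvd_sum_prod_remove)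
  moreover have "u j dvd smult (c j) ((\<Sum>i\<in>A. pderiv (u i) * P i) - pderiv (u j) * P j)"
    unfolding P_def using assms(1,4) by (intro dvd_smult dvd_sum_prod_remove)
  ultimately have "u j dvd ((\<Sum>i\<in>A. smult (c i) (pderiv (u i)) * P i) - smult (c j) (pderiv (u j)) * P j)
      - smult (c j) ((\<Sum>i\<in>A. pderiv (u i) * P i) - pderiv (u j) * P j)"
    by (rule dvd_diff)
  also have "\<dots> = (\<Sum>i\<in>A. smult (c i) (pderiv (u i)) * P i) - smult (c j) (\<Sum>i\<in>A. pderiv (u i) * P i)"
    by (simp add: smult_diff_right)
  finally show ?thesis by (simp add: delta pderiv c_def)
qed

lemma monic_irreducible_not_dvd_prod_others:
  fixes u :: "'b \<Rightarrow> 'a::field poly"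
  assumes "finite A" and "\<forall>i\<in>A. irreducible (u i)" and "\<forall>i\<in>A. lead_coeff (u i) = 1"
    and "inj_on u A" and "j \<in> A"
  shows "\<not> u j dvd (\<Prod>l\<in>A-{j}. u l)"
proof
  assume "u j dvd (\<Prod>l\<in>A-{j}. u l)"
  moreover have prime: "prime_elem (u j)"
    using assms(2,5) by (simp add: field_poly_irreducible_imp_prime)
  ultimately obtain l where l: "l \<in> A - {j}" and "u j dvd u l"
    using prime_elem_dvd_prod_iff[OF prime] assms(1) by blast
  moreover have "\<not> is_unit (u j)" using prime by (rule prime_elem_not_unit)
  ultimately have "u l dvd u j"
    using irreducibleD'[of "u l" "u j"] assms(2) by blast
  with \<open>u j dvd u l\<close> have "u j = u l"
    using l assms(3,5) by (intro monic_dvd_antisym) auto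
  with l assms(4,5) show False by (auto dest: inj_onD)
qed

lemma not_dvd_pderiv_prod:
  fixes u :: "'b \<Rightarrow> 'a::field_char_0 poly"
  assumes "finite A" and "\<forall>i\<in>A. irreducible (u i)" and "\<forall>i\<in>A. lead_coeff (u i) = 1"
    and "inj_on u A" and "j \<in> A"
  shows "\<not> u j dvd pderiv (\<Prod>i\<in>A. u i)"
proof
  assume dvd_pderiv: "u j dvd pderiv (\<Prod>i\<in>A. u i)"
  have "u j dvd pderiv (\<Prod>i\<in>A. u i) - pderiv (u j) * (\<Prod>l\<in>A-{j}. u l)"
    using dvd_sum_prod_remove[OF assms(1,5), where u = u and f = "\<lambda>i. pderiv (u i)"]
    by (simp add: pderiv_prod mult.commute)
  from dvd_diff[OF dvd_pderiv this] have "u j dvd pderiv (u j) * (\<Prod>l\<in>A-{j}. u l)"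
    by simp
  moreover have prime: "prime_elem (u j)"
    using assms(2,5) by (simp add: field_poly_irreducible_imp_prime)
  moreover have "degree (u j) \<noteq> 0"
    using prime by (auto simp: prime_elem_def is_unit_iff_degree)
  ultimately show False
    using monic_irreducible_not_dvd_prod_others[OF assms] by (simp add: prime_elem_dvd_mult_iff)
qed

lemma not_dvd_delta0_one:
  fixes u :: "'b \<Rightarrow> 'a::field_char_0 poly"
  assumes "finite A" and "\<forall>i\<in>A. irreducible (u i)" and "\<forall>i\<in>A. lead_coeff (u i) = 1"
    and "inj_on u A" and "j \<in> A" and "\<forall>i\<in>A. \<alpha> i \<ge> 1" and "\<alpha> j \<noteq> 1"
  shows "\<not> u j dvd delta0_one (\<Prod>i\<in>A. u i ^ \<alpha> i) (\<Prod>i\<in>A. u i)"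
proof
  assume dvd_delta: "u j dvd delta0_one (\<Prod>i\<in>A. u i ^ \<alpha> i) (\<Prod>i\<in>A. u i)"
  have "\<forall>i\<in>A. u i \<noteq> 0" using assms(2) by auto
  from dvd_diff[OF dvd_delta dvd_delta0_one_minus_pderiv[OF assms(1,6) this assms(5)]]
  have "u j dvd smult (1 - of_nat (\<alpha> j)) (pderiv (\<Prod>i\<in>A. u i))" by simp
  moreover have "1 - of_nat (\<alpha> j) \<noteq> (0::'a)" using assms(7) by simp
  ultimately show False
    using not_dvd_pderiv_prod[OF assms(1-5)] by (simp add: dvd_smult_iff)
qed

theorem lemma6p5:
  fixes u :: "nat \<Rightarrow> 'a::field_char_0 poly"
    and \<alpha> :: "nat \<Rightarrow> nat"
    and t k :: nat
    and h :: "'a poly"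
  assumes irr: "\<forall>i\<in>{1..t}. irreducible (u i)"
    and monic: "\<forall>i\<in>{1..t}. lead_coeff (u i) = 1"
    and dist: "inj_on u {1..t}"
    and k1: "1 \<le> k" and kt: "k \<le> t"
    and mult_ge2: "\<forall>i\<in>{1..k}. \<alpha> i \<ge> 2"
    and mult_1: "\<forall>i\<in>{k+1..t}. \<alpha> i = 1"
    and h_def: "h = (\<Prod>i\<in>{1..t}. u i ^ \<alpha> i)"
  defines "\<pi> \<equiv> (\<Prod>i\<in>{1..t}. u i)"
    and "\<Theta> \<equiv> (\<Prod>i\<in>{1..k}. u i)"
  shows "(\<exists>\<nu>. \<Theta> dvd (\<nu> * delta0_one h \<pi> - 1))
       \<and> (\<forall>\<nu>1 \<nu>2. \<Theta> dvd (\<nu>1 * delta0_one h \<pi> - 1) \<longrightarrow>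
                  \<Theta> dvd (\<nu>2 * delta0_one h \<pi> - 1) \<longrightarrow> \<Theta> dvd (\<nu>1 - \<nu>2))
       \<and> (\<forall>\<nu>. \<Theta> dvd (\<nu> * delta0_one h \<pi> - 1) \<longrightarrow>
              \<Theta> dvd ((\<nu> * pderiv \<pi> - 1) - \<nu> * ((\<pi> * pderiv h) div h))
            \<and> (\<forall>j\<in>{1..k}. u j dvd (\<nu> * pderiv \<pi> - [:1 / (1 - of_nat (\<alpha> j)):])))"
proof -
  define \<delta> where "\<delta> = delta0_one h \<pi>"
  have alpha_pos: "\<forall>i\<in>{1..t}. \<alpha> i \<ge> 1"
    using mult_ge2 mult_1 by (metis Suc_eq_plus1 atLeastAtMost_iff le_refl not_less_eq_eq one_le_numeral order_trans)
  have cong: "u j dvd \<delta> - smult (1 - of_nat (\<alpha> j)) (pderiv \<pi>)" if "j \<in> {1..k}" for j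
    unfolding \<delta>_def h_def \<pi>_def using irr that kt by (intro dvd_delta0_one_minus_pderiv alpha_pos) auto
  have "\<exists>x. u j dvd x * \<delta> - 1" if j: "j \<in> {1..k}" for j
  proof (rule irreducible_imp_inverse_mod)
    have "j \<in> {1..t}" "\<alpha> j \<noteq> 1" using j kt mult_ge2 by force+
    then show "\<not> u j dvd \<delta>"
      unfolding \<delta>_def h_def \<pi>_def by (intro not_dvd_delta0_one[OF _ irr monic dist _ alpha_pos]) simp_all
    show "irreducible (u j)" using irr \<open>j \<in> {1..t}\<close> by blast
  qed
  then have existence: "\<exists>\<nu>. \<Theta> dvd \<nu> * \<delta> - 1"
    unfolding \<Theta>_def by (intro inverse_mod_prod) auto
  have residue_pderiv: "u j dvd \<nu> * pderiv \<pi> - [:1 / (1 - of_nat (\<alpha> j)):]"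
    if "\<Theta> dvd \<nu> * \<delta> - 1" and j: "j \<in> {1..k}" for \<nu> j
  proof (rule inverse_mod_smult[OF _ cong[OF j]])
    have "u j dvd \<Theta>" unfolding \<Theta>_def using j by (intro dvd_prodI) auto
    with that(1) show "u j dvd \<nu> * \<delta> - 1" by (metis dvd_trans)
    show "1 - of_nat (\<alpha> j) \<noteq> (0::'a)" using mult_ge2 j by force
  qed
  have "(\<nu> * pderiv \<pi> - 1) - \<nu> * ((\<pi> * pderiv h) div h) = \<nu> * \<delta> - 1" for \<nu>
    unfolding \<delta>_def delta0_one_def by (simp add: algebra_simps)
  then show ?thesis
    unfolding \<delta>_def[symmetric] using existence inverse_mod_unique[of \<Theta>] residue_pderiv
    by (intro conjI allI impI ballI) (simp_all only:)
qed

end
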